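(* In the setting below, if $$\sum_{t\in\mathcal K}\|Z^\top f(x_t)\|_2\le \sum_{t\in\mathcal K^c}\|Z^\top f(x_t)\|_2\qquad\text{for all } Z\in\mathbb{R}^{m\times n},$$ then $\bar A$ is a global minimizer of $\min_{A\in\mathbb{R}^{n\times m}}\sum_{t=0}^{T-1}\|(\bar A-A)f(x_t)+\bar d_t\|_2$.
   Context: $f:\mathbb{R}^n\to\mathbb{R}^m$ is given, $\bar A\in\mathbb{R}^{n\times m}$, $\bar d_0,\dots,\bar d_{T-1}\in\mathbb{R}^n$, and $x_0=0_n$, $x_{t+1}=\bar A f(x_t)+\bar d_t$ for $t=0,\dots,T-1$. $\mathcal K:=\{t\in\{0,\dots,T-1\}:\bar d_t\ne 0\}$, $\mathcal K^c:=\{0,\dots,T-1\}\setminus\mathcal K$. *)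

theory Defs
  imports "HOL-Analysis.Analysis"
begin

text \<open>Trajectory: x_0 = 0, x_{t+1} = Abar *v f(x_t) + d_t.
  Vectors in R^n are real^'n, R^m are real^'m; a matrix in R^{n x m} is real^'m^'n.\<close>
fun traj :: "(real^'n \<Rightarrow> real^'m) \<Rightarrow> real^'m^'n \<Rightarrow> (nat \<Rightarrow> real^'n) \<Rightarrow> nat \<Rightarrow> real^'n" where
  "traj f A d 0 = 0"
| "traj f A d (Suc t) = A *v f (traj f A d t) + d t"

end

theory Submission
  imports Defs
begin

text \<open>Perturbing the model by \<open>B = Abar - A\<close> adds \<open>B f(x_t)\<close> to every residual. On the
  steps where \<open>d_t \<noteq> 0\<close> the triangle inequality loses at most \<open>\<Sum>\<^sub>K \<parallel>B f(x_t)\<parallel>\<close>, while on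
  the remaining steps (where \<open>d_t = 0\<close>) the residual grows from \<open>0\<close> to \<open>\<Sum>\<^sub>K\<^sub>c \<parallel>B f(x_t)\<parallel>\<close>;
  the hypothesis, applied to \<open>Z = B\<^sup>T\<close>, says the gain dominates the loss.\<close>

lemma sum_norm_le_sum_norm_add:
  fixes u d :: "'i \<Rightarrow> 'a::real_normed_vector"
  assumes "finite I" and "K \<subseteq> I"
    and d_zero: "\<And>i. i \<in> I - K \<Longrightarrow> d i = 0"
    and dominated: "(\<Sum>i\<in>K. norm (u i)) \<le> (\<Sum>i\<in>I - K. norm (u i))"
  shows "(\<Sum>i\<in>I. norm (d i)) \<le> (\<Sum>i\<in>I. norm (u i + d i))"
proof -
  have split: "sum g I = sum g K + sum g (I - K)" for g :: "'i \<Rightarrow> real"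
    using assms(1,2) by (metis sum.subset_diff add.commute)
  have "(\<Sum>i\<in>K. norm (d i)) - (\<Sum>i\<in>K. norm (u i)) \<le> (\<Sum>i\<in>K. norm (u i + d i))"
    unfolding sum_subtractf[symmetric]
    by (rule sum_mono) (metis norm_diff_ineq add.commute)
  then show ?thesis
    using dominated by (simp add: split[of "\<lambda>i. norm (d i)"] split[of "\<lambda>i. norm (u i + d i)"] d_zero)
qed

theorem corollary1:
  fixes f :: "real^'n \<Rightarrow> real^'m"
    and Abar :: "real^'m^'n"
    and d :: "nat \<Rightarrow> real^'n"
    and T :: nat
  defines "K \<equiv> {t. t < T \<and> d t \<noteq> 0}"
  assumes "\<forall>Z :: real^'n^'m.
     (\<Sum>t\<in>K. norm (transpose Z *v f (traj f Abar d t)))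
       \<le> (\<Sum>t\<in>{0..<T} - K. norm (transpose Z *v f (traj f Abar d t)))"
  shows "\<forall>A :: real^'m^'n.
     (\<Sum>t<T. norm ((Abar - Abar) *v f (traj f Abar d t) + d t))
       \<le> (\<Sum>t<T. norm ((Abar - A) *v f (traj f Abar d t) + d t))"
proof
  fix A :: "real^'m^'n"
  have dominated: "(\<Sum>t\<in>K. norm ((Abar - A) *v f (traj f Abar d t)))
      \<le> (\<Sum>t\<in>{..<T} - K. norm ((Abar - A) *v f (traj f Abar d t)))"
    using assms(2)[rule_format, of "transpose (Abar - A)"]
    by (simp add: transpose_transpose atLeast0LessThan)
  have "(\<Sum>t<T. norm (d t)) \<le> (\<Sum>t<T. norm ((Abar - A) *v f (traj f Abar d t) + d t))"
    by (rule sum_norm_le_sum_norm_add[OF _ _ _ dominated]) (auto simp: K_def)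
  then show "(\<Sum>t<T. norm ((Abar - Abar) *v f (traj f Abar d t) + d t))
      \<le> (\<Sum>t<T. norm ((Abar - A) *v f (traj f Abar d t) + d t))"
    by simp
qed

end
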